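(* For all integers $n,i,k\ge0$, as an identity of polynomials in $q$, \[ {n+i\brack i}{n+k\brack k}=\sum_{j\ge0}(-1)^{i+j+k}\,q^{\frac{(k+i-j)(2n+k+i-j+1)}{2}}{j\brack j-i,\,j-k,\,i+k-j}{n+j\brack j}. \] Consequently, defining $P^{(1)}_{k,k}=1$, $P^{(1)}_{k,j}=0$ for $j\neq k$ and $P^{(r+1)}_{k,j}=\sum_i (-1)^{i+j+k}q^{\frac{(k+i-j)(k+i-j+1)}{2}}{j\brack j-i,\,j-k,\,i+k-j}P^{(r)}_{k,i}$, the $P^{(r)}_{k,j}$ are polynomials in $q$ with integer coefficients and ${n+k\brack k}^r=\sum_j q^{(rk-j)n}{n+j\brack j}P^{(r)}_{k,j}$ for all $n,k\ge0$, $r\ge1$.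
   Context: $q$ is an indeterminate; $(q)_0=1$, $(q)_m=(1-q)(1-q^2)\cdots(1-q^m)$. The $q$-binomial ${n\brack k}=\frac{(q)_n}{(q)_k(q)_{n-k}}$ if $0\le k\le n$ and $0$ otherwise. The $q$-multinomial ${m\brack a,b,c}=\frac{(q)_m}{(q)_a(q)_b(q)_c}$ if $a,b,c\ge0$ and $a+b+c=m$, and $0$ otherwise. *)

theory Defs
  imports "HOL-Computational_Algebra.Polynomial"
begin

text \<open>Polynomials in the indeterminate q are rendered as rat poly; q is the polynomial [:0,1:].\<close>

definition qX :: "rat poly" where "qX = [:0, 1:]"

definition qpoch :: "nat \<Rightarrow> rat poly" where
  "qpoch m = (\<Prod>i\<in>{1..m}. 1 - qX ^ i)"

text \<open>q-binomial coefficient (exact polynomial division).\<close>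
definition qbinom :: "nat \<Rightarrow> nat \<Rightarrow> rat poly" where
  "qbinom n k = (if k \<le> n then qpoch n div (qpoch k * qpoch (n - k)) else 0)"

definition qmultinom :: "nat \<Rightarrow> int \<Rightarrow> int \<Rightarrow> int \<Rightarrow> rat poly" where
  "qmultinom m a b c =
     (if a \<ge> 0 \<and> b \<ge> 0 \<and> c \<ge> 0 \<and> a + b + c = int m
      then qpoch m div (qpoch (nat a) * qpoch (nat b) * qpoch (nat c)) else 0)"

text \<open>Pq r k j is P^{(r)}_{k,j} for r \<ge> 1 (the value at r = 0 is an unused dummy).\<close>
fun Pq :: "nat \<Rightarrow> nat \<Rightarrow> nat \<Rightarrow> rat poly" where
  "Pq 0 k j = 0"
| "Pq (Suc 0) k j = (if j = k then 1 else 0)"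
| "Pq (Suc (Suc r)) k j =
     (\<Sum>i\<le>j. (-1) ^ (i + j + k) * qX ^ ((k + i - j) * (k + i - j + 1) div 2)
        * qmultinom j (int j - int i) (int j - int k) (int i + int k - int j) * Pq (Suc r) k i)"

end

theory Submission
  imports Defs
begin

text \<open>
  After multiplication by (q)_i (q)_k the product formula has no denominators left:
  [n+m; m] (q)_m = (q^{n+1};q)_m turns the left side into (q^{n+1};q)_i (q^{n+1};q)_k, and with
  d = i + k - j the multinomial in the j-th term cancels against (q)_i (q)_k, leaving
  [i; d] (q)_k/(q)_{k-d} (q^{n+1};q)_j.  The identity is therefore the expansion
  (xq;q)_i = \<Sum>_d [i; d] (q)_k/(q)_{k-d} (-x)^d q^{d(d+1)/2} (xq^{k+1};q)_{i-d}
  at x = q^n, multiplied by (xq;q)_k; this expansion follows by induction on i from the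
  q-Pascal rule.

  The power formula follows by induction on r: multiplying the expansion of [n+k; k]^r by
  [n+k; k] and expanding every product [n+i; i] [n+k; k] by the first identity reproduces the
  recursion defining P^{(r+1)}, the factor q^{nd} being absorbed into q^{(rk-j)n}.
  Integrality holds because q-binomials and q-multinomials are products of Gaussian
  polynomials, which obey the q-Pascal recursion.
\<close>

definition qpochhammer :: "rat poly \<Rightarrow> nat \<Rightarrow> rat poly" where
  "qpochhammer a m = (\<Prod>t<m. 1 - a * qX ^ t)"

lemma qpochhammer_0 [simp]: "qpochhammer a 0 = 1"
  by (simp add: qpochhammer_def)

lemma qpochhammer_Suc: "qpochhammer a (Suc m) = qpochhammer a m * (1 - a * qX ^ m)"
  by (simp add: qpochhammer_def)

lemma qpochhammer_add: "qpochhammer a (m + l) = qpochhammer a m * qpochhammer (a * qX ^ m) l"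
  by (induction l) (simp_all add: qpochhammer_Suc power_add mult.assoc)

lemma qpoch_0 [simp]: "qpoch 0 = 1"
  by (simp add: qpoch_def)

lemma qpoch_Suc: "qpoch (Suc m) = qpoch m * (1 - qX ^ Suc m)"
  by (simp add: qpoch_def prod.cl_ivl_Suc)

lemma qpoch_eq_qpochhammer: "qpoch m = qpochhammer qX m"
  by (induction m) (simp_all add: qpoch_Suc qpochhammer_Suc)

lemma qpoch_add: "qpoch (a + b) = qpoch a * qpochhammer (qX ^ Suc a) b"
  by (simp add: qpoch_eq_qpochhammer qpochhammer_add)

lemma one_minus_qX_power_nonzero:
  assumes "i \<ge> 1" shows "1 - qX ^ i \<noteq> 0"
proof
  assume "1 - qX ^ i = 0"
  then have "poly (1 - qX ^ i) (2::rat) = 0" by simp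
  moreover have "(1::rat) < 2 ^ i" using assms by (intro one_less_power) auto
  ultimately show False by (simp add: qX_def)
qed

lemma qpoch_nonzero: "qpoch m \<noteq> 0"
  unfolding qpoch_def using one_minus_qX_power_nonzero by auto

subsection \<open>Gaussian polynomials\<close>

fun gauss_poly :: "nat \<Rightarrow> nat \<Rightarrow> rat poly" where
  "gauss_poly 0 b = 1"
| "gauss_poly (Suc a) 0 = 1"
| "gauss_poly (Suc a) (Suc b) = gauss_poly (Suc a) b + qX ^ Suc b * gauss_poly a (Suc b)"

lemma gauss_poly_0_right [simp]: "gauss_poly a 0 = 1"
  by (cases a) auto

lemma gauss_poly_qpoch: "gauss_poly a b * qpoch a * qpoch b = qpoch (a + b)"
proof (induction a b rule: gauss_poly.induct)
  case (3 a b)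
  let ?Q = "qpoch (Suc (a + b))"
  have "gauss_poly (Suc a) (Suc b) * qpoch (Suc a) * qpoch (Suc b)
      = (gauss_poly (Suc a) b * qpoch (Suc a) * qpoch b) * (1 - qX ^ Suc b)
        + qX ^ Suc b * (gauss_poly a (Suc b) * qpoch a * qpoch (Suc b)) * (1 - qX ^ Suc a)"
    by (simp only: gauss_poly.simps qpoch_Suc) (simp add: algebra_simps)
  also have "\<dots> = ?Q * (1 - qX ^ Suc b) + qX ^ Suc b * ?Q * (1 - qX ^ Suc a)"
    using 3 by simp
  also have "\<dots> = ?Q * (1 - qX ^ Suc (Suc (a + b)))"
    by (simp add: algebra_simps flip: power_add)
  also have "\<dots> = qpoch (Suc a + Suc b)"
    by (simp add: qpoch_Suc)
  finally show ?case .
qed simp_all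

lemma qbinom_add_eq_gauss_poly: "qbinom (a + b) a = gauss_poly a b"
  using gauss_poly_qpoch[of a b, symmetric] qpoch_nonzero
  by (simp add: qbinom_def mult.assoc)

lemma qbinom_qpoch: "k \<le> m \<Longrightarrow> qbinom m k * qpoch k * qpoch (m - k) = qpoch m"
  using qbinom_add_eq_gauss_poly[of k "m - k"] gauss_poly_qpoch[of k "m - k"] by simp

lemma qbinom_eq_0: "m < k \<Longrightarrow> qbinom m k = 0"
  by (simp add: qbinom_def)

lemma qbinom_0_right [simp]: "qbinom m 0 = 1"
  using qbinom_add_eq_gauss_poly[of 0 m] by simp

lemma qbinom_Suc_Suc: "qbinom (Suc i) (Suc e) = qbinom i (Suc e) + qX ^ (i - e) * qbinom i e"
proof (cases "e < i")
  case True
  then obtain b where i: "i = Suc e + b" by (metis less_imp_Suc_add add_Suc)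
  then show ?thesis
    using qbinom_add_eq_gauss_poly[of "Suc e" "Suc b"] qbinom_add_eq_gauss_poly[of "Suc e" b]
      qbinom_add_eq_gauss_poly[of e "Suc b"] by simp
next
  case False
  then show ?thesis
    using qbinom_add_eq_gauss_poly[of e 0] qbinom_add_eq_gauss_poly[of "Suc e" 0]
    by (cases "e = i") (auto simp: qbinom_eq_0)
qed

lemma qbinom_qpoch_eq_qpochhammer: "qbinom (n + m) m * qpoch m = qpochhammer (qX ^ Suc n) m"
proof -
  have "qbinom (n + m) m * qpoch m * qpoch n = qpoch n * qpochhammer (qX ^ Suc n) m"
    using qbinom_qpoch[of m "n + m"] qpoch_add[of n m] by (simp add: mult_ac)
  then show ?thesis
    using qpoch_nonzero[of n] by (simp add: mult.commute)
qed

subsection \<open>A q-Chu-Vandermonde type expansion\<close>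

definition qfalling :: "nat \<Rightarrow> nat \<Rightarrow> rat poly" where
  "qfalling k d = (\<Prod>t<d. 1 - qX ^ (k - t))"

lemma qfalling_0 [simp]: "qfalling k 0 = 1"
  by (simp add: qfalling_def)

lemma qfalling_Suc: "qfalling k (Suc d) = qfalling k d * (1 - qX ^ (k - d))"
  by (simp add: qfalling_def)

lemma qfalling_eq_0: "k < d \<Longrightarrow> qfalling k d = 0"
  unfolding qfalling_def by (rule prod_zero) (auto intro!: bexI[of _ k])

lemma qpoch_eq_qfalling: "d \<le> k \<Longrightarrow> qpoch k = qpoch (k - d) * qfalling k d"
proof (induction d)
  case (Suc d)
  then have "qpoch (k - d) = qpoch (k - Suc d) * (1 - qX ^ (k - d))"
    by (metis Suc_diff_Suc Suc_le_lessD qpoch_Suc)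
  with Suc show ?case by (simp add: qfalling_Suc mult.assoc)
qed simp

definition qchu_term :: "rat poly \<Rightarrow> nat \<Rightarrow> nat \<Rightarrow> nat \<Rightarrow> rat poly" where
  "qchu_term x k d m =
     qfalling k d * (-x) ^ d * qX ^ (d * (d + 1) div 2) * qpochhammer (x * qX ^ Suc k) m"

lemma triangle_Suc: "Suc d * (Suc d + 1) div 2 = d * (d + 1) div 2 + Suc d"
proof -
  have "Suc d * (Suc d + 1) = d * (d + 1) + 2 * Suc d" by simp
  then show ?thesis by simp
qed

lemma qchu_term_step:
  assumes "d \<le> i"
  shows "qchu_term x k d (Suc i - d) + qX ^ (i - d) * qchu_term x k (Suc d) (i - d)
       = qchu_term x k d (i - d) * (1 - x * qX ^ Suc i)"
proof (cases "d \<le> k")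
  case True
  define W where "W = qchu_term x k d (i - d)"
  have first: "qchu_term x k d (Suc i - d) = W * (1 - x * (qX ^ Suc k * qX ^ (i - d)))"
    using assms by (simp add: W_def qchu_term_def Suc_diff_le qpochhammer_Suc mult_ac)
  have "qchu_term x k (Suc d) (i - d) = qfalling k d * (1 - qX ^ (k - d)) * ((-x) ^ d * (-x))
      * (qX ^ (d * (d + 1) div 2) * qX ^ Suc d) * qpochhammer (x * qX ^ Suc k) (i - d)"
    by (simp only: qchu_term_def qfalling_Suc triangle_Suc power_add power_Suc2[of "-x"])
  then have second: "qchu_term x k (Suc d) (i - d) = W * (1 - qX ^ (k - d)) * (-x) * qX ^ Suc d"
    by (simp add: W_def qchu_term_def mult_ac)
  have shift: "qX ^ (i - d) * qX ^ Suc d = qX ^ Suc i"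
    using assms by (simp flip: power_add)
  have shift': "qX ^ (i - d) * qX ^ (k - d) * qX ^ Suc d = qX ^ Suc k * qX ^ (i - d)"
  proof -
    have "i - d + (k - d) + Suc d = Suc k + (i - d)"
      using assms True by simp
    then show ?thesis by (simp only: flip: power_add)
  qed
  have "qchu_term x k d (Suc i - d) + qX ^ (i - d) * qchu_term x k (Suc d) (i - d)
      = W * (1 - x * (qX ^ Suc k * qX ^ (i - d)) - x * (qX ^ (i - d) * qX ^ Suc d)
          + x * (qX ^ (i - d) * qX ^ (k - d) * qX ^ Suc d))"
    unfolding first second by (simp add: algebra_simps)
  also have "\<dots> = W * (1 - x * qX ^ Suc i)"
    unfolding shift shift' by (simp add: algebra_simps)
  finally show ?thesis by (simp add: W_def)
qed (simp add: qchu_term_def qfalling_eq_0)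

lemma qpochhammer_expand:
  "qpochhammer (x * qX) i = (\<Sum>d\<le>i. qbinom i d * qchu_term x k d (i - d))"
proof (induction i)
  case (Suc i)
  define U where "U d = qchu_term x k d (Suc i - d)" for d
  have "(\<Sum>d\<le>Suc i. qbinom (Suc i) d * U d)
      = U 0 + (\<Sum>e\<le>i. qbinom (Suc i) (Suc e) * U (Suc e))"
    by (simp only: sum.atMost_Suc_shift) simp
  also have "\<dots> = (U 0 + (\<Sum>e\<le>i. qbinom i (Suc e) * U (Suc e)))
        + (\<Sum>e\<le>i. qX ^ (i - e) * qbinom i e * U (Suc e))"
    by (simp add: qbinom_Suc_Suc algebra_simps sum.distrib)
  also have "U 0 + (\<Sum>e\<le>i. qbinom i (Suc e) * U (Suc e)) = (\<Sum>d\<le>Suc i. qbinom i d * U d)"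
    by (simp only: sum.atMost_Suc_shift) simp
  also have "\<dots> = (\<Sum>d\<le>i. qbinom i d * U d)"
    by (simp add: qbinom_eq_0)
  also have "(\<Sum>d\<le>i. qbinom i d * U d) + (\<Sum>e\<le>i. qX ^ (i - e) * qbinom i e * U (Suc e))
      = (\<Sum>d\<le>i. qbinom i d * (U d + qX ^ (i - d) * U (Suc d)))"
    by (simp add: algebra_simps flip: sum.distrib)
  also have "\<dots> = (\<Sum>d\<le>i. qbinom i d * qchu_term x k d (i - d)) * (1 - x * qX ^ Suc i)"
    unfolding sum_distrib_right by (intro sum.cong) (simp_all add: U_def qchu_term_step mult.assoc)
  finally show ?case
    by (simp add: Suc.IH U_def qpochhammer_Suc mult.assoc)
qed (simp add: qchu_term_def)

lemma qpochhammer_product_expand: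
  "qpochhammer (qX ^ Suc n) i * qpochhammer (qX ^ Suc n) k
     = (\<Sum>d\<le>i + k. qbinom i d * qfalling k d * (-(qX ^ n)) ^ d * qX ^ (d * (d + 1) div 2)
          * qpochhammer (qX ^ Suc n) (i + k - d))"
proof -
  have tail: "qchu_term (qX ^ n) k d (i - d) * qpochhammer (qX ^ Suc n) k
      = qfalling k d * (-(qX ^ n)) ^ d * qX ^ (d * (d + 1) div 2)
          * qpochhammer (qX ^ Suc n) (i + k - d)" if "d \<le> i" for d
  proof -
    have "qpochhammer (qX ^ Suc n) k * qpochhammer (qX ^ n * qX ^ Suc k) (i - d)
        = qpochhammer (qX ^ Suc n) (i + k - d)"
      using that qpochhammer_add[of "qX ^ Suc n" k "i - d"]
      by (simp add: power_add mult_ac add.commute)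
    then show ?thesis by (simp add: qchu_term_def mult_ac)
  qed
  have "qpochhammer (qX ^ Suc n) i * qpochhammer (qX ^ Suc n) k
      = (\<Sum>d\<le>i. qbinom i d * qchu_term (qX ^ n) k d (i - d)) * qpochhammer (qX ^ Suc n) k"
    using qpochhammer_expand[of "qX ^ n" i k] by (simp add: ac_simps)
  also have "\<dots> = (\<Sum>d\<le>i. qbinom i d * qfalling k d * (-(qX ^ n)) ^ d * qX ^ (d * (d + 1) div 2)
          * qpochhammer (qX ^ Suc n) (i + k - d))"
    unfolding sum_distrib_right
  proof (rule sum.cong)
    fix d assume "d \<in> {..i}"
    then show "qbinom i d * qchu_term (qX ^ n) k d (i - d) * qpochhammer (qX ^ Suc n) k
        = qbinom i d * qfalling k d * (-(qX ^ n)) ^ d * qX ^ (d * (d + 1) div 2)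
          * qpochhammer (qX ^ Suc n) (i + k - d)"
      using tail[of d] by (simp only: atMost_iff mult.assoc)
  qed simp
  also have "\<dots> = (\<Sum>d\<le>i + k. qbinom i d * qfalling k d * (-(qX ^ n)) ^ d
          * qX ^ (d * (d + 1) div 2) * qpochhammer (qX ^ Suc n) (i + k - d))"
    by (rule sum.mono_neutral_left) (auto simp: qbinom_eq_0)
  finally show ?thesis .
qed

subsection \<open>The product formula\<close>

lemma qpoch_add3:
  "qpoch (a + b + c) = gauss_poly a (b + c) * gauss_poly b c * (qpoch a * qpoch b * qpoch c)"
proof -
  have "qpoch (a + (b + c)) = gauss_poly a (b + c) * qpoch a * qpoch (b + c)"
    by (rule gauss_poly_qpoch[symmetric])
  also have "qpoch (b + c) = gauss_poly b c * qpoch b * qpoch c"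
    by (rule gauss_poly_qpoch[symmetric])
  finally show ?thesis by (simp add: add.assoc mult_ac)
qed

lemma qmultinom_eq_gauss_poly:
  "qmultinom (a + b + c) (int a) (int b) (int c) = gauss_poly a (b + c) * gauss_poly b c"
  using qpoch_nonzero by (simp add: qmultinom_def qpoch_add3[of a b c])

lemma qmultinom_qpoch:
  "qmultinom (a + b + c) (int a) (int b) (int c) * (qpoch a * qpoch b * qpoch c) = qpoch (a + b + c)"
  by (simp add: qmultinom_eq_gauss_poly qpoch_add3[of a b c])

lemma qmultinom_eq_0: "\<not> (a \<ge> 0 \<and> b \<ge> 0 \<and> c \<ge> 0) \<Longrightarrow> qmultinom m a b c = 0"
  by (auto simp: qmultinom_def)

lemma qmultinom_qpoch_qpoch:
  assumes "j \<le> i + k"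
  shows "qmultinom j (int j - int i) (int j - int k) (int i + int k - int j) * (qpoch i * qpoch k)
       = qbinom i (i + k - j) * qfalling k (i + k - j) * qpoch j"
proof -
  define d where "d = i + k - j"
  consider "d \<le> i" "d \<le> k" | "i < d" | "k < d" by linarith
  then show ?thesis
  proof cases
    case 1
    have qi: "qpoch i = qbinom i d * qpoch d * qpoch (i - d)"
      using qbinom_qpoch[of d i] 1 by simp
    have qk: "qpoch k = qpoch (k - d) * qfalling k d"
      using qpoch_eq_qfalling[of d k] 1 by simp
    have "k - d + (i - d) + d = j" "int (k - d) = int j - int i" "int (i - d) = int j - int k"
      "int d = int i + int k - int j"
      using assms 1 by (auto simp: d_def)
    then have multinom: "qmultinom j (int j - int i) (int j - int k) (int i + int k - int j)
        * (qpoch (k - d) * qpoch (i - d) * qpoch d) = qpoch j"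
      using qmultinom_qpoch[of "k - d" "i - d" d] by simp
    have "qmultinom j (int j - int i) (int j - int k) (int i + int k - int j) * (qpoch i * qpoch k)
        = qmultinom j (int j - int i) (int j - int k) (int i + int k - int j)
          * (qpoch (k - d) * qpoch (i - d) * qpoch d) * (qbinom i d * qfalling k d)"
      unfolding qi qk by (simp only: mult_ac)
    then show ?thesis
      unfolding multinom d_def[symmetric] by (simp only: mult_ac)
  next
    case 2
    then have "int j - int k < 0" by (simp add: d_def)
    then have "qmultinom j (int j - int i) (int j - int k) (int i + int k - int j) = 0"
      by (simp add: qmultinom_eq_0)
    with 2 show ?thesis by (simp add: d_def qbinom_eq_0)
  next
    case 3
    then have "int j - int i < 0" by (simp add: d_def)
    then have "qmultinom j (int j - int i) (int j - int k) (int i + int k - int j) = 0"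
      by (simp add: qmultinom_eq_0)
    with 3 show ?thesis by (simp add: d_def qfalling_eq_0)
  qed
qed

lemma triangle_shift: "(d::nat) * (2 * n + d + 1) div 2 = n * d + d * (d + 1) div 2"
proof -
  have "d * (2 * n + d + 1) = d * (d + 1) + (n * d) * 2" by (simp add: algebra_simps)
  then show ?thesis by simp
qed

lemma qbinom_product_term_qpoch:
  assumes "j \<le> i + k"
  defines "d \<equiv> i + k - j"
  shows "(-1) ^ (i + j + k) * qX ^ ((k + i - j) * (2 * n + k + i - j + 1) div 2)
      * qmultinom j (int j - int i) (int j - int k) (int i + int k - int j) * qbinom (n + j) j
      * (qpoch i * qpoch k)
    = qbinom i d * qfalling k d * (-(qX ^ n)) ^ d * qX ^ (d * (d + 1) div 2)
      * qpochhammer (qX ^ Suc n) j"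
proof -
  have sign: "(-1::rat poly) ^ (i + j + k) = (-1) ^ d"
  proof -
    have "i + j + k = d + 2 * j" using assms by simp
    then show ?thesis by (simp only: power_add power_mult) simp
  qed
  have exponent: "qX ^ ((k + i - j) * (2 * n + k + i - j + 1) div 2)
      = (qX ^ n) ^ d * qX ^ (d * (d + 1) div 2)"
  proof -
    have "k + i - j = d" "2 * n + k + i - j + 1 = 2 * n + d + 1"
      using assms by simp_all
    then show ?thesis
      by (simp only: triangle_shift power_add power_mult)
  qed
  have "(-1) ^ (i + j + k) * qX ^ ((k + i - j) * (2 * n + k + i - j + 1) div 2)
      * qmultinom j (int j - int i) (int j - int k) (int i + int k - int j) * qbinom (n + j) j
      * (qpoch i * qpoch k)
    = (-1) ^ d * (qX ^ n) ^ d * qX ^ (d * (d + 1) div 2)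
      * (qbinom i d * qfalling k d * qpoch j) * qbinom (n + j) j"
    unfolding sign exponent d_def qmultinom_qpoch_qpoch[OF assms(1), symmetric]
    by (simp only: mult_ac)
  also have "\<dots> = (-1) ^ d * (qX ^ n) ^ d * qX ^ (d * (d + 1) div 2)
      * (qbinom i d * qfalling k d) * qpochhammer (qX ^ Suc n) j"
    unfolding qbinom_qpoch_eq_qpochhammer[symmetric] by (simp only: mult_ac)
  also have "\<dots> = qbinom i d * qfalling k d * (-(qX ^ n)) ^ d * qX ^ (d * (d + 1) div 2)
      * qpochhammer (qX ^ Suc n) j"
    by (simp add: power_minus[of "qX ^ n"] mult_ac)
  finally show ?thesis .
qed

theorem qbinom_product_formula:
  "qbinom (n + i) i * qbinom (n + k) k =
     (\<Sum>j\<le>i + k. (-1) ^ (i + j + k) * qX ^ ((k + i - j) * (2 * n + k + i - j + 1) div 2)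
        * qmultinom j (int j - int i) (int j - int k) (int i + int k - int j) * qbinom (n + j) j)"
  (is "?L = (\<Sum>j\<le>i + k. ?t j)")
proof -
  define V where "V d = qbinom i d * qfalling k d * (-(qX ^ n)) ^ d * qX ^ (d * (d + 1) div 2)
      * qpochhammer (qX ^ Suc n) (i + k - d)" for d
  have "?L * (qpoch i * qpoch k) = qpochhammer (qX ^ Suc n) i * qpochhammer (qX ^ Suc n) k"
    using qbinom_qpoch_eq_qpochhammer[of n i] qbinom_qpoch_eq_qpochhammer[of n k]
    by (simp add: mult_ac)
  also have "\<dots> = (\<Sum>d\<le>i + k. V d)"
    unfolding V_def by (rule qpochhammer_product_expand)
  also have "\<dots> = (\<Sum>j\<le>i + k. V (i + k - j))"
    by (rule sum.reindex_bij_witness[of _ "\<lambda>j. i + k - j" "\<lambda>j. i + k - j"]) auto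
  also have "\<dots> = (\<Sum>j\<le>i + k. ?t j * (qpoch i * qpoch k))"
  proof (rule sum.cong)
    fix j assume "j \<in> {..i + k}"
    then have j: "j \<le> i + k" and "i + k - (i + k - j) = j" by auto
    then show "V (i + k - j) = ?t j * (qpoch i * qpoch k)"
      unfolding V_def by (simp only: qbinom_product_term_qpoch[OF j])
  qed simp
  finally have "?L * (qpoch i * qpoch k) = (\<Sum>j\<le>i + k. ?t j) * (qpoch i * qpoch k)"
    by (simp only: sum_distrib_right)
  then show ?thesis
    using qpoch_nonzero[of i] qpoch_nonzero[of k] by simp
qed

subsection \<open>Powers of a q-binomial\<close>

lemma qbinom_product_formula_shifted:
  assumes "i \<le> R"
  shows "qX ^ ((R - i) * n) * qbinom (n + i) i * qbinom (n + k) k =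
     (\<Sum>j\<le>i + k. qX ^ ((R + k - j) * n) * qbinom (n + j) j
        * ((-1) ^ (i + j + k) * qX ^ ((k + i - j) * (k + i - j + 1) div 2)
           * qmultinom j (int j - int i) (int j - int k) (int i + int k - int j)))"
  (is "_ = (\<Sum>j\<le>i + k. ?r j)")
proof -
  have "qX ^ ((R - i) * n) * qbinom (n + i) i * qbinom (n + k) k
      = (\<Sum>j\<le>i + k. qX ^ ((R - i) * n) * ((-1) ^ (i + j + k)
          * qX ^ ((k + i - j) * (2 * n + k + i - j + 1) div 2)
          * qmultinom j (int j - int i) (int j - int k) (int i + int k - int j) * qbinom (n + j) j))"
    by (simp only: mult.assoc qbinom_product_formula sum_distrib_left)
  also have "\<dots> = (\<Sum>j\<le>i + k. ?r j)"
  proof (rule sum.cong)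
    fix j assume "j \<in> {..i + k}"
    then have "R - i + (k + i - j) = R + k - j"
      using assms by simp
    then have linear: "(R - i) * n + n * (k + i - j) = (R + k - j) * n"
      by (metis add_mult_distrib mult.commute)
    have "2 * n + k + i - j + 1 = 2 * n + (k + i - j) + 1"
      using \<open>j \<in> {..i + k}\<close> by simp
    then have "(R - i) * n + (k + i - j) * (2 * n + k + i - j + 1) div 2
        = (R + k - j) * n + (k + i - j) * (k + i - j + 1) div 2"
      by (simp only: triangle_shift add.assoc[symmetric] linear)
    then have exponent: "qX ^ ((R - i) * n) * qX ^ ((k + i - j) * (2 * n + k + i - j + 1) div 2)
        = qX ^ ((R + k - j) * n) * qX ^ ((k + i - j) * (k + i - j + 1) div 2)"
      by (simp only: flip: power_add)
    have reorder: "x * (s * y * m * b) = s * m * b * (x * y)" "z * b * (s * w * m) = s * m * b * (z * w)"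
      for x y z w s m b :: "rat poly"
      by (simp_all only: mult_ac)
    show "qX ^ ((R - i) * n) * ((-1) ^ (i + j + k)
          * qX ^ ((k + i - j) * (2 * n + k + i - j + 1) div 2)
          * qmultinom j (int j - int i) (int j - int k) (int i + int k - int j) * qbinom (n + j) j)
        = ?r j"
      by (simp only: reorder exponent)
  qed simp
  finally show ?thesis .
qed

lemma qbinom_mult_expansion:
  fixes P :: "nat \<Rightarrow> rat poly"
  assumes vanish: "\<And>i. R < i \<Longrightarrow> P i = 0"
  shows "qbinom (n + k) k * (\<Sum>i\<le>R. qX ^ ((R - i) * n) * qbinom (n + i) i * P i)
    = (\<Sum>j\<le>R + k. qX ^ ((R + k - j) * n) * qbinom (n + j) j
        * (\<Sum>i\<le>j. (-1) ^ (i + j + k) * qX ^ ((k + i - j) * (k + i - j + 1) div 2)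
           * qmultinom j (int j - int i) (int j - int k) (int i + int k - int j) * P i))"
proof -
  define M where "M i j = qmultinom j (int j - int i) (int j - int k) (int i + int k - int j)" for i j
  define f where "f i j = qX ^ ((R + k - j) * n) * qbinom (n + j) j
      * ((-1) ^ (i + j + k) * qX ^ ((k + i - j) * (k + i - j + 1) div 2) * M i j) * P i" for i j
  have M_eq_0: "M i j = 0" if "j < i \<or> i + k < j" for i j
    using that by (auto simp: M_def qmultinom_eq_0)
  have "qbinom (n + k) k * (\<Sum>i\<le>R. qX ^ ((R - i) * n) * qbinom (n + i) i * P i)
      = (\<Sum>i\<le>R. (qX ^ ((R - i) * n) * qbinom (n + i) i * qbinom (n + k) k) * P i)"
    by (simp add: sum_distrib_left mult_ac)
  also have "\<dots> = (\<Sum>i\<le>R. \<Sum>j\<le>i + k. f i j)"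
    by (intro sum.cong refl)
       (simp add: qbinom_product_formula_shifted f_def M_def sum_distrib_right)
  also have "\<dots> = (\<Sum>i\<le>R. \<Sum>j\<le>R + k. f i j)"
    by (intro sum.cong refl sum.mono_neutral_left) (auto simp: f_def M_eq_0)
  also have "\<dots> = (\<Sum>i\<le>R + k. \<Sum>j\<le>R + k. f i j)"
    by (rule sum.mono_neutral_left) (auto simp: f_def vanish)
  also have "\<dots> = (\<Sum>j\<le>R + k. \<Sum>i\<le>R + k. f i j)"
    by (rule sum.swap)
  also have "\<dots> = (\<Sum>j\<le>R + k. \<Sum>i\<le>j. f i j)"
    by (intro sum.cong refl sum.mono_neutral_right) (auto simp: f_def M_eq_0)
  finally show ?thesis
    by (simp add: f_def M_def sum_distrib_left mult_ac)
qed

lemma Pq_eq_0: "Suc r * k < j \<Longrightarrow> Pq (Suc r) k j = 0"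
proof (induction r arbitrary: j)
  case (Suc r)
  have zero: "qmultinom j (int j - int i) (int j - int k) (int i + int k - int j) * Pq (Suc r) k i = 0"
    for i
  proof (cases "Suc r * k < i")
    case False
    with Suc.prems have "int i + int k - int j < 0" by simp
    then show ?thesis by (simp add: qmultinom_eq_0)
  qed (simp add: Suc.IH)
  show ?case
    by (simp only: Pq.simps mult.assoc zero mult_zero_right sum.neutral_const)
qed simp

theorem qbinom_power_expansion:
  "qbinom (n + k) k ^ Suc r =
     (\<Sum>j\<le>Suc r * k. qX ^ ((Suc r * k - j) * n) * qbinom (n + j) j * Pq (Suc r) k j)"
proof (induction r)
  case 0
  have "(\<Sum>j\<le>k. qX ^ ((k - j) * n) * qbinom (n + j) j * Pq (Suc 0) k j)
      = (\<Sum>j\<le>k. if j = k then qbinom (n + k) k else 0)"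
    by (rule sum.cong) auto
  then show ?case by simp
next
  case (Suc r)
  have "qbinom (n + k) k ^ Suc (Suc r) = qbinom (n + k) k * qbinom (n + k) k ^ Suc r"
    by simp
  also have "\<dots> = (\<Sum>j\<le>Suc r * k + k. qX ^ ((Suc r * k + k - j) * n) * qbinom (n + j) j
      * Pq (Suc (Suc r)) k j)"
    unfolding Suc.IH by (subst qbinom_mult_expansion) (simp_all add: Pq_eq_0 mult.assoc)
  finally show ?case
    by (simp add: add.commute)
qed

subsection \<open>Integrality\<close>

definition int_coeffs :: "rat poly \<Rightarrow> bool" where
  "int_coeffs p \<longleftrightarrow> (\<forall>m. coeff p m \<in> \<int>)"

lemma int_coeffs_0: "int_coeffs 0"
  by (simp add: int_coeffs_def)

lemma int_coeffs_1: "int_coeffs 1"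
  by (simp add: int_coeffs_def coeff_1)

lemma int_coeffs_minus_1: "int_coeffs (-1)"
  by (simp add: int_coeffs_def coeff_1)

lemma int_coeffs_qX: "int_coeffs qX"
  by (simp add: int_coeffs_def qX_def coeff_pCons split: nat.split)

lemma int_coeffs_add: "int_coeffs p \<Longrightarrow> int_coeffs q \<Longrightarrow> int_coeffs (p + q)"
  by (simp add: int_coeffs_def)

lemma int_coeffs_mult: "int_coeffs p \<Longrightarrow> int_coeffs q \<Longrightarrow> int_coeffs (p * q)"
  by (simp add: int_coeffs_def coeff_mult Ints_sum Ints_mult)

lemma int_coeffs_power: "int_coeffs p \<Longrightarrow> int_coeffs (p ^ n)"
  by (induction n) (simp_all add: int_coeffs_1 int_coeffs_mult)

lemma int_coeffs_sum: "(\<And>x. x \<in> A \<Longrightarrow> int_coeffs (f x)) \<Longrightarrow> int_coeffs (sum f A)"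
  by (simp add: int_coeffs_def coeff_sum Ints_sum)

lemma int_coeffs_gauss_poly: "int_coeffs (gauss_poly a b)"
  by (induction a b rule: gauss_poly.induct)
     (simp_all add: int_coeffs_1 int_coeffs_add int_coeffs_mult int_coeffs_power int_coeffs_qX)

lemma int_coeffs_qmultinom: "int_coeffs (qmultinom m a b c)"
proof (cases "a \<ge> 0 \<and> b \<ge> 0 \<and> c \<ge> 0 \<and> a + b + c = int m")
  case True
  then have "qmultinom m a b c = gauss_poly (nat a) (nat b + nat c) * gauss_poly (nat b) (nat c)"
    using qmultinom_eq_gauss_poly[of "nat a" "nat b" "nat c"]
    by (simp add: nat_add_distrib[symmetric])
  then show ?thesis
    by (simp add: int_coeffs_mult int_coeffs_gauss_poly)
next
  case False
  then show ?thesis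
    by (auto simp: qmultinom_def int_coeffs_0)
qed

lemma int_coeffs_Pq: "int_coeffs (Pq r k j)"
  by (induction r k j rule: Pq.induct)
     (auto intro!: int_coeffs_sum int_coeffs_mult int_coeffs_power int_coeffs_0 int_coeffs_1
       int_coeffs_minus_1 int_coeffs_qX int_coeffs_qmultinom)

theorem mainTheorem9:
  shows "(\<forall>n i k. qbinom (n + i) i * qbinom (n + k) k =
            (\<Sum>j\<le>i + k. (-1) ^ (i + j + k)
               * qX ^ ((k + i - j) * (2 * n + k + i - j + 1) div 2)
               * qmultinom j (int j - int i) (int j - int k) (int i + int k - int j)
               * qbinom (n + j) j))
       \<and> (\<forall>r k j m. r \<ge> 1 \<longrightarrow> coeff (Pq r k j) m \<in> \<int>)
       \<and> (\<forall>n k r. r \<ge> 1 \<longrightarrow>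
            qbinom (n + k) k ^ r =
            (\<Sum>j\<le>r * k. qX ^ ((r * k - j) * n) * qbinom (n + j) j * Pq r k j))"
proof (intro conjI allI impI)
  fix n k r :: nat
  assume "r \<ge> 1"
  then obtain r' where "r = Suc r'"
    using not0_implies_Suc by fastforce
  then show "qbinom (n + k) k ^ r =
      (\<Sum>j\<le>r * k. qX ^ ((r * k - j) * n) * qbinom (n + j) j * Pq r k j)"
    by (simp only: qbinom_power_expansion)
qed (simp_all add: qbinom_product_formula int_coeffs_Pq[unfolded int_coeffs_def])

end
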